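(* (i) Let $h:\omega\to\omega$ be nondecreasing and let $g(n)=h(2n)$. Then $\mathrm{IOE}(h)\equiv_W\mathrm{IOE}(g)$ and $\mathrm{AED}(h)\equiv_S\mathrm{AED}(g)$. (ii) For all real numbers $a,b>1$, $\mathrm{IOE}(n\mapsto 2^{(a^n)})\equiv_W\mathrm{IOE}(n\mapsto 2^{(b^n)})$ and $\mathrm{AED}(n\mapsto2^{(a^n)})\equiv_S\mathrm{AED}(n\mapsto2^{(b^n)})$.
   Context: A mass problem is a nonempty set of functions $\omega\to\omega$. For mass problems $\mathcal B,\mathcal C$: $\mathcal B\le_S\mathcal C$ if there is a Turing functional $\Phi$ with $\Phi^g\in\mathcal B$ for all $g\in\mathcal C$; $\mathcal B\le_W\mathcal C$ if every $g\in\mathcal C$ Turing computes some $f\in\mathcal B$; $\equiv_S,\equiv_W$ are the induced equivalences. For a function $h$ (with values in $\omega$ or positive reals), $\mathrm{IOE}(h)$ is the set of functions $y:\omega\to\omega$ such that for every computable function $x$ with $x(n)<h(n)$ for all $n$, there are infinitely many $n$ with $x(n)=y(n)$; $\mathrm{AED}(h)$ is the set of functions $y:\omega\to\omega$ with $y(n)<h(n)$ for all $n$ such that for every computable function $x$, $x(n)\ne y(n)$ for all but finitely many $n$. *)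

theory Defs
  imports Complex_Main
begin

text \<open>Codes of partial recursive functions with one oracle call primitive.  A Turing functional is a code; its
  result on oracle g is the function n |-> value on input [n].\<close>

datatype recf = Zero | Succ | Proj nat | Orc | Comp recf "recf list"
  | Prec recf recf | Mn recf

inductive eval :: "(nat \<Rightarrow> nat) \<Rightarrow> recf \<Rightarrow> nat list \<Rightarrow> nat \<Rightarrow> bool"
  for g :: "nat \<Rightarrow> nat" where
  ev_zero: "eval g Zero xs 0"
| ev_succ: "eval g Succ (x # xs) (Suc x)"
| ev_proj: "i < length xs \<Longrightarrow> eval g (Proj i) xs (xs ! i)"
| ev_orc: "eval g Orc (x # xs) (g x)"
| ev_comp: "list_all2 (\<lambda>h y. eval g h xs y) hs ys \<Longrightarrow> eval g f ys z
             \<Longrightarrow> eval g (Comp f hs) xs z"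
| ev_prec0: "eval g f xs y \<Longrightarrow> eval g (Prec f h) (0 # xs) y"
| ev_precS: "eval g (Prec f h) (n # xs) r \<Longrightarrow> eval g h (n # r # xs) y
             \<Longrightarrow> eval g (Prec f h) (Suc n # xs) y"
| ev_mn: "eval g f (n # xs) 0 \<Longrightarrow> (\<forall>m<n. \<exists>k. eval g f (m # xs) (Suc k))
             \<Longrightarrow> eval g (Mn f) xs n"

definition functional_yields :: "recf \<Rightarrow> (nat \<Rightarrow> nat) \<Rightarrow> (nat \<Rightarrow> nat) \<Rightarrow> bool" where
  "functional_yields c g f \<longleftrightarrow> (\<forall>n. eval g c [n] (f n))"

definition turing_computes :: "(nat \<Rightarrow> nat) \<Rightarrow> (nat \<Rightarrow> nat) \<Rightarrow> bool" where
  "turing_computes g f \<longleftrightarrow> (\<exists>c. functional_yields c g f)"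

text \<open>Computable = computable with the (computable) empty oracle.\<close>
definition computable :: "(nat \<Rightarrow> nat) \<Rightarrow> bool" where
  "computable f \<longleftrightarrow> turing_computes (\<lambda>_. 0) f"

definition strong_red :: "(nat \<Rightarrow> nat) set \<Rightarrow> (nat \<Rightarrow> nat) set \<Rightarrow> bool" (infix "\<le>\<^sub>S" 50) where
  "B \<le>\<^sub>S C \<longleftrightarrow> (\<exists>c. \<forall>g\<in>C. \<exists>f\<in>B. functional_yields c g f)"

definition weak_red :: "(nat \<Rightarrow> nat) set \<Rightarrow> (nat \<Rightarrow> nat) set \<Rightarrow> bool" (infix "\<le>\<^sub>W" 50) where
  "B \<le>\<^sub>W C \<longleftrightarrow> (\<forall>g\<in>C. \<exists>f\<in>B. turing_computes g f)"

definition strong_eq :: "(nat \<Rightarrow> nat) set \<Rightarrow> (nat \<Rightarrow> nat) set \<Rightarrow> bool" (infix "\<equiv>\<^sub>S" 50) where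
  "B \<equiv>\<^sub>S C \<longleftrightarrow> B \<le>\<^sub>S C \<and> C \<le>\<^sub>S B"

definition weak_eq :: "(nat \<Rightarrow> nat) set \<Rightarrow> (nat \<Rightarrow> nat) set \<Rightarrow> bool" (infix "\<equiv>\<^sub>W" 50) where
  "B \<equiv>\<^sub>W C \<longleftrightarrow> B \<le>\<^sub>W C \<and> C \<le>\<^sub>W B"

text \<open>Bounds h are real-valued (natural-number bounds are coerced).\<close>
definition IOE :: "(nat \<Rightarrow> real) \<Rightarrow> (nat \<Rightarrow> nat) set" where
  "IOE h = {y. \<forall>x. computable x \<and> (\<forall>n. real (x n) < h n) \<longrightarrow> infinite {n. x n = y n}}"

definition AED :: "(nat \<Rightarrow> real) \<Rightarrow> (nat \<Rightarrow> nat) set" where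
  "AED h = {y. (\<forall>n. real (y n) < h n) \<and> (\<forall>x. computable x \<longrightarrow> finite {n. x n = y n})}"

end

theory Submission
  imports Defs
begin

(* If y \<in> IOE(h) and neither half n \<mapsto> y(2n), n \<mapsto> y(2n+1) were in IOE(h(2n)), the two
   computable witnesses could be interleaved into one computable function, bounded by h because
   h is nondecreasing, that agrees with y only finitely often.  Dually, for z \<in> AED(h(2n)) the
   function m \<mapsto> z(m div 2) lies in AED(h).  The remaining reductions are inclusions, since
   h(n) \<le> h(2n).  Part (ii) follows by iterating (i): for every a, b > 1 some k gives
   2^(a^n) \<le> 2^(b^(2^k n)). *)

section \<open>Relativized computation\<close>

fun relativize :: "recf \<Rightarrow> recf \<Rightarrow> recf" where
  "relativize c Orc = Comp c [Proj 0]"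
| "relativize c (Comp f hs) = Comp (relativize c f) (map (relativize c) hs)"
| "relativize c (Prec f h) = Prec (relativize c f) (relativize c h)"
| "relativize c (Mn f) = Mn (relativize c f)"
| "relativize c Zero = Zero"
| "relativize c Succ = Succ"
| "relativize c (Proj i) = Proj i"

lemma eval_Comp_single: "eval g f [y] z \<Longrightarrow> eval g h xs y \<Longrightarrow> eval g (Comp f [h]) xs z"
  by (rule ev_comp[where ys="[y]"]) auto

lemma eval_Proj_nth: "i < length xs \<Longrightarrow> xs ! i = v \<Longrightarrow> eval g (Proj i) xs v"
  using ev_proj by blast

lemma eval_relativize:
  "eval f e xs v \<Longrightarrow> functional_yields c g f \<Longrightarrow> eval g (relativize c e) xs v"
proof (induction rule: eval.induct)
  case (ev_orc x xs)
  then show ?case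
    unfolding functional_yields_def by (auto intro!: eval_Comp_single eval_Proj_nth)
next
  case (ev_comp xs hs ys f' z)
  have "list_all2 (\<lambda>h y. eval g h xs y) (map (relativize c) hs) ys"
    using ev_comp.IH ev_comp.prems by (auto simp: list.rel_map elim!: list_all2_mono)
  then show ?case using ev_comp by (auto intro: eval.ev_comp)
next
  case (ev_mn f' n xs)
  then show ?case by (auto intro!: eval.ev_mn)
qed (auto intro: eval.ev_zero eval.ev_succ eval.ev_proj eval.ev_prec0 eval.ev_precS)

lemma functional_yields_relativize:
  "functional_yields c g f \<Longrightarrow> functional_yields e f y \<Longrightarrow> functional_yields (relativize c e) g y"
  unfolding functional_yields_def by (auto intro: eval_relativize simp: functional_yields_def)

lemma functional_yields_Orc: "functional_yields Orc g g"
  unfolding functional_yields_def by (auto intro: ev_orc)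

lemma functional_yields_Comp_index:
  assumes "functional_yields c g x" and "\<And>n. eval g e [n] (p n)"
  shows "functional_yields (Comp c [e]) g (\<lambda>n. x (p n))"
  using assms unfolding functional_yields_def by (auto intro: eval_Comp_single)

lemma weak_red_trans: "A \<le>\<^sub>W B \<Longrightarrow> B \<le>\<^sub>W C \<Longrightarrow> A \<le>\<^sub>W C"
  unfolding weak_red_def turing_computes_def by (meson functional_yields_relativize)

lemma strong_red_trans: "A \<le>\<^sub>S B \<Longrightarrow> B \<le>\<^sub>S C \<Longrightarrow> A \<le>\<^sub>S C"
  unfolding strong_red_def by (meson functional_yields_relativize)

lemma weak_red_if_subset: "C \<subseteq> B \<Longrightarrow> B \<le>\<^sub>W C"
  unfolding weak_red_def turing_computes_def using functional_yields_Orc by blast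

lemma strong_red_if_subset: "C \<subseteq> B \<Longrightarrow> B \<le>\<^sub>S C"
  unfolding strong_red_def using functional_yields_Orc by blast

lemma weak_eq_refl: "A \<equiv>\<^sub>W A"
  unfolding weak_eq_def by (simp add: weak_red_if_subset)

lemma strong_eq_refl: "A \<equiv>\<^sub>S A"
  unfolding strong_eq_def by (simp add: strong_red_if_subset)

lemma weak_eq_trans: "A \<equiv>\<^sub>W B \<Longrightarrow> B \<equiv>\<^sub>W C \<Longrightarrow> A \<equiv>\<^sub>W C"
  unfolding weak_eq_def by (meson weak_red_trans)

lemma strong_eq_trans: "A \<equiv>\<^sub>S B \<Longrightarrow> B \<equiv>\<^sub>S C \<Longrightarrow> A \<equiv>\<^sub>S C"
  unfolding strong_eq_def by (meson strong_red_trans)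

section \<open>Codes for doubling, halving and interleaving\<close>

definition double_code :: recf where
  "double_code = Prec Zero (Comp Succ [Comp Succ [Proj 1]])"

lemma eval_double_code: "eval g double_code [n] (2 * n)"
proof (induction n)
  case 0
  then show ?case unfolding double_code_def by (auto intro: ev_prec0 ev_zero)
next
  case (Suc n)
  have "eval g (Comp Succ [Comp Succ [Proj 1]]) [n, 2 * n] (Suc (Suc (2 * n)))"
    by (intro eval_Comp_single ev_succ) (auto intro: ev_succ eval_Proj_nth)
  then show ?case using Suc unfolding double_code_def by (auto intro: ev_precS)
qed

lemma eval_double_Suc_code: "eval g (Comp Succ [double_code]) [n] (2 * n + 1)"
  using eval_double_code by (auto intro!: eval_Comp_single ev_succ)

definition is_zero_code :: recf where
  "is_zero_code = Prec (Comp Succ [Zero]) Zero"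

lemma eval_is_zero_code: "eval g is_zero_code [p] (if p = 0 then 1 else 0)"
proof (induction p)
  case 0
  then show ?case unfolding is_zero_code_def by (auto intro!: ev_prec0 eval_Comp_single ev_succ ev_zero)
next
  case (Suc p)
  then show ?case unfolding is_zero_code_def by (auto intro: ev_precS ev_zero)
qed

definition parity_code :: recf where
  "parity_code = Prec Zero (Comp is_zero_code [Proj 1])"

lemma eval_parity_code: "eval g parity_code [m] (m mod 2)"
proof (induction m)
  case 0
  then show ?case unfolding parity_code_def by (auto intro: ev_prec0 ev_zero)
next
  case (Suc m)
  have "eval g is_zero_code [m mod 2] (Suc m mod 2)"
    using eval_is_zero_code[of g "m mod 2"] by (auto simp: mod_Suc)
  then have "eval g (Comp is_zero_code [Proj 1]) [m, m mod 2] (Suc m mod 2)"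
    by (rule eval_Comp_single) (auto intro: eval_Proj_nth)
  then show ?case using Suc unfolding parity_code_def by (auto intro: ev_precS)
qed

lemma eval_Prec_select:
  assumes "eval g A [m] a" and "eval g B [m] b"
  shows "eval g (Prec A (Comp B [Proj 2])) [p, m] (if p = 0 then a else b)"
proof (induction p)
  case 0
  then show ?case using assms(1) by (auto intro: ev_prec0)
next
  case (Suc k)
  obtain r where r: "eval g (Prec A (Comp B [Proj 2])) [k, m] r" using Suc by blast
  have "eval g (Comp B [Proj 2]) [k, r, m] b"
    by (rule eval_Comp_single[OF assms(2)], rule eval_Proj_nth) simp_all
  then show ?case using r by (auto intro: ev_precS)
qed

definition half_code :: recf where
  "half_code = Prec Zero
     (Comp (Prec (Proj 0) (Comp Succ [Proj 2])) [Comp parity_code [Proj 0], Proj 1])"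

lemma eval_half_code: "eval g half_code [n] (n div 2)"
proof (induction n)
  case 0
  then show ?case unfolding half_code_def by (auto intro: ev_prec0 ev_zero)
next
  case (Suc n)
  have step: "(if n mod 2 = 0 then n div 2 else Suc (n div 2)) = Suc n div 2"
    by presburger
  have "eval g (Proj 0) [n div 2] (n div 2)"
    by (rule eval_Proj_nth) simp_all
  then have "eval g (Prec (Proj 0) (Comp Succ [Proj 2])) [n mod 2, n div 2]
      (if n mod 2 = 0 then n div 2 else Suc (n div 2))"
    by (rule eval_Prec_select) (rule ev_succ)
  then have "eval g (Comp (Prec (Proj 0) (Comp Succ [Proj 2])) [Comp parity_code [Proj 0], Proj 1])
      [n, n div 2] (Suc n div 2)"
    unfolding step
    by (intro ev_comp[where ys="[n mod 2, n div 2]"])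
      (auto intro!: eval_Comp_single[OF eval_parity_code] eval_Proj_nth)
  then show ?case using Suc unfolding half_code_def by (auto intro: ev_precS)
qed

definition interleave_code :: "recf \<Rightarrow> recf \<Rightarrow> recf" where
  "interleave_code c0 c1 =
     Comp (Prec (Comp c0 [half_code]) (Comp (Comp c1 [half_code]) [Proj 2])) [parity_code, Proj 0]"

lemma functional_yields_interleave:
  assumes "functional_yields c0 g x0" and "functional_yields c1 g x1"
  shows "functional_yields (interleave_code c0 c1) g
           (\<lambda>m. if even m then x0 (m div 2) else x1 (m div 2))"
  unfolding functional_yields_def
proof
  fix m
  have "eval g (Prec (Comp c0 [half_code]) (Comp (Comp c1 [half_code]) [Proj 2])) [m mod 2, m]
          (if m mod 2 = 0 then x0 (m div 2) else x1 (m div 2))"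
    using assms unfolding functional_yields_def
    by (intro eval_Prec_select) (auto intro!: eval_Comp_single eval_half_code)
  then show "eval g (interleave_code c0 c1) [m] (if even m then x0 (m div 2) else x1 (m div 2))"
    unfolding interleave_code_def even_iff_mod_2_eq_zero
    by (intro ev_comp[where ys="[m mod 2, m]"]) (auto intro!: eval_parity_code eval_Proj_nth)
qed

lemma computable_interleave:
  "computable x0 \<Longrightarrow> computable x1 \<Longrightarrow>
     computable (\<lambda>m. if even m then x0 (m div 2) else x1 (m div 2))"
  unfolding computable_def turing_computes_def by (blast intro: functional_yields_interleave)

lemma computable_even_odd_part:
  assumes "computable x"
  shows "computable (\<lambda>n. x (2 * n))" and "computable (\<lambda>n. x (2 * n + 1))"
proof -
  obtain c where "functional_yields c (\<lambda>_. 0) x"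
    using assms unfolding computable_def turing_computes_def by blast
  then show "computable (\<lambda>n. x (2 * n))" and "computable (\<lambda>n. x (2 * n + 1))"
    unfolding computable_def turing_computes_def
    by (blast intro: functional_yields_Comp_index[where p="\<lambda>n. 2 * n"] eval_double_code
        functional_yields_Comp_index[where p="\<lambda>n. 2 * n + 1"] eval_double_Suc_code)+
qed

section \<open>Dilating the bound by a factor two\<close>

lemma infinite_even_or_odd_part:
  assumes "infinite (S :: nat set)"
  shows "infinite {n. 2 * n \<in> S} \<or> infinite {n. 2 * n + 1 \<in> S}"
proof -
  have "S \<subseteq> (\<lambda>n. 2 * n) ` {n. 2 * n \<in> S} \<union> (\<lambda>n. 2 * n + 1) ` {n. 2 * n + 1 \<in> S}"
  proof
    fix m assume "m \<in> S"
    then show "m \<in> (\<lambda>n. 2 * n) ` {n. 2 * n \<in> S} \<union> (\<lambda>n. 2 * n + 1) ` {n. 2 * n + 1 \<in> S}"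
      by (cases "even m") (auto elim!: evenE oddE)
  qed
  then show ?thesis using assms by (meson finite_Un finite_imageI finite_subset)
qed

lemma IOE_antimono: "(\<And>n. h n \<le> h' n) \<Longrightarrow> IOE h' \<subseteq> IOE h"
  unfolding IOE_def by (auto; meson less_le_trans)

lemma AED_mono: "(\<And>n. h n \<le> h' n) \<Longrightarrow> AED h \<subseteq> AED h'"
  unfolding AED_def by (auto intro: less_le_trans)

lemma mono_le_double: "mono (h :: nat \<Rightarrow> real) \<Longrightarrow> h n \<le> h (2 * n)"
  by (simp add: monoD)

lemma mono_le_double_div2: "mono (h :: nat \<Rightarrow> real) \<Longrightarrow> h (2 * (m div 2)) \<le> h m"
  by (simp add: monoD)

lemma IOE_double_weak_red:
  fixes h :: "nat \<Rightarrow> real"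
  assumes "mono h"
  shows "IOE (\<lambda>n. h (2 * n)) \<le>\<^sub>W IOE h"
  unfolding weak_red_def
proof
  fix y assume y: "y \<in> IOE h"
  define y0 y1 where "y0 = (\<lambda>n. y (2 * n))" and "y1 = (\<lambda>n. y (2 * n + 1))"
  have computes: "turing_computes y y0" "turing_computes y y1"
    unfolding turing_computes_def y0_def y1_def
    by (blast intro: functional_yields_Orc
        functional_yields_Comp_index[where p="\<lambda>n. 2 * n"] eval_double_code
        functional_yields_Comp_index[where p="\<lambda>n. 2 * n + 1"] eval_double_Suc_code)+
  have "y0 \<in> IOE (\<lambda>n. h (2 * n)) \<or> y1 \<in> IOE (\<lambda>n. h (2 * n))"
  proof (rule ccontr)
    assume "\<not> ?thesis"
    then obtain x0 x1
      where x0: "computable x0" "\<And>n. real (x0 n) < h (2 * n)" "finite {n. x0 n = y0 n}"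
        and x1: "computable x1" "\<And>n. real (x1 n) < h (2 * n)" "finite {n. x1 n = y1 n}"
      unfolding IOE_def by auto
    define x where "x = (\<lambda>m. if even m then x0 (m div 2) else x1 (m div 2))"
    have "real (x m) < h m" for m
      using x0(2)[of "m div 2"] x1(2)[of "m div 2"] mono_le_double_div2[OF assms, of m]
      unfolding x_def by auto
    then have "infinite {m. x m = y m}"
      using y computable_interleave[OF x0(1) x1(1)] unfolding IOE_def x_def by blast
    moreover have "{n. 2 * n \<in> {m. x m = y m}} = {n. x0 n = y0 n}"
      and "{n. 2 * n + 1 \<in> {m. x m = y m}} = {n. x1 n = y1 n}"
      unfolding x_def y0_def y1_def by auto
    ultimately show False using infinite_even_or_odd_part x0(3) x1(3) by (metis (no_types))
  qed
  then show "\<exists>f\<in>IOE (\<lambda>n. h (2 * n)). turing_computes y f" using computes by blast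
qed

lemma AED_double_strong_red:
  fixes h :: "nat \<Rightarrow> real"
  assumes "mono h"
  shows "AED h \<le>\<^sub>S AED (\<lambda>n. h (2 * n))"
  unfolding strong_red_def
proof (intro exI ballI)
  fix z assume z: "z \<in> AED (\<lambda>n. h (2 * n))"
  define f where "f = (\<lambda>m. z (m div 2))"
  have "f \<in> AED h"
    unfolding AED_def
  proof (intro CollectI conjI allI impI)
    show "real (f m) < h m" for m
      using z mono_le_double_div2[OF assms, of m] unfolding AED_def f_def
      by (auto intro: less_le_trans)
  next
    fix x assume "computable x"
    show "finite {n. x n = f n}"
    proof (rule ccontr)
      assume "infinite {n. x n = f n}"
      then have "infinite {n. x (2 * n) = z n} \<or> infinite {n. x (2 * n + 1) = z n}"
        using infinite_even_or_odd_part unfolding f_def by fastforce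
      then show False
        using computable_even_odd_part[OF \<open>computable x\<close>] z unfolding AED_def by auto
    qed
  qed
  moreover have "functional_yields (Comp Orc [half_code]) z f"
    unfolding f_def by (intro functional_yields_Comp_index functional_yields_Orc eval_half_code)
  ultimately show "\<exists>f\<in>AED h. functional_yields (Comp Orc [half_code]) z f" by blast
qed

lemma IOE_double_weak_eq:
  fixes h :: "nat \<Rightarrow> real"
  assumes "mono h"
  shows "IOE h \<equiv>\<^sub>W IOE (\<lambda>n. h (2 * n))"
  unfolding weak_eq_def
  using IOE_double_weak_red[OF assms]
  by (simp add: weak_red_if_subset IOE_antimono mono_le_double[OF assms])

lemma AED_double_strong_eq:
  fixes h :: "nat \<Rightarrow> real"
  assumes "mono h"
  shows "AED h \<equiv>\<^sub>S AED (\<lambda>n. h (2 * n))"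
  unfolding strong_eq_def
  using AED_double_strong_red[OF assms]
  by (simp add: strong_red_if_subset AED_mono mono_le_double[OF assms])

lemma mono_dilate: "mono (h :: nat \<Rightarrow> real) \<Longrightarrow> mono (\<lambda>n. h (c * n))"
  by (simp add: mono_def)

lemma dilate_Suc_pow2: "(\<lambda>n::nat. h (2 ^ Suc k * n)) = (\<lambda>n. (\<lambda>n. h (2 ^ k * n)) (2 * n))"
  by (simp add: mult_ac)

lemma IOE_pow2_weak_eq:
  fixes h :: "nat \<Rightarrow> real"
  assumes "mono h"
  shows "IOE h \<equiv>\<^sub>W IOE (\<lambda>n. h (2 ^ k * n))"
proof (induction k)
  case 0
  then show ?case by (simp add: weak_eq_refl)
next
  case (Suc k)
  have "IOE (\<lambda>n. h (2 ^ k * n)) \<equiv>\<^sub>W IOE (\<lambda>n. h (2 ^ Suc k * n))"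
    unfolding dilate_Suc_pow2 by (rule IOE_double_weak_eq[OF mono_dilate[OF assms]])
  with Suc.IH show ?case by (rule weak_eq_trans)
qed

lemma AED_pow2_strong_eq:
  fixes h :: "nat \<Rightarrow> real"
  assumes "mono h"
  shows "AED h \<equiv>\<^sub>S AED (\<lambda>n. h (2 ^ k * n))"
proof (induction k)
  case 0
  then show ?case by (simp add: strong_eq_refl)
next
  case (Suc k)
  have "AED (\<lambda>n. h (2 ^ k * n)) \<equiv>\<^sub>S AED (\<lambda>n. h (2 ^ Suc k * n))"
    unfolding dilate_Suc_pow2 by (rule AED_double_strong_eq[OF mono_dilate[OF assms]])
  with Suc.IH show ?case by (rule strong_eq_trans)
qed

lemma IOE_weak_red_if_le_dilation:
  fixes h h' :: "nat \<Rightarrow> real"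
  assumes "mono h'" and "\<And>n. h n \<le> h' (2 ^ k * n)"
  shows "IOE h \<le>\<^sub>W IOE h'"
proof -
  have "IOE h \<le>\<^sub>W IOE (\<lambda>n. h' (2 ^ k * n))"
    using assms(2) by (intro weak_red_if_subset IOE_antimono)
  then show ?thesis
    using IOE_pow2_weak_eq[OF assms(1), of k] weak_red_trans unfolding weak_eq_def by blast
qed

lemma AED_strong_red_if_le_dilation:
  fixes h h' :: "nat \<Rightarrow> real"
  assumes "mono h" and "\<And>n. h' n \<le> h (2 ^ k * n)"
  shows "AED h \<le>\<^sub>S AED h'"
proof -
  have "AED (\<lambda>n. h (2 ^ k * n)) \<le>\<^sub>S AED h'"
    using assms(2) by (intro strong_red_if_subset AED_mono)
  then show ?thesis
    using AED_pow2_strong_eq[OF assms(1), of k] strong_red_trans unfolding strong_eq_def by blast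
qed

section \<open>Double exponential bounds\<close>

lemma mono_double_exp: "(b :: real) > 1 \<Longrightarrow> mono (\<lambda>n :: nat. 2 powr (b ^ n))"
  by (auto intro!: monoI powr_mono power_increasing)

lemma double_exp_le_dilation:
  fixes a b :: real
  assumes a: "a > 1" and b: "b > 1"
  obtains k where "\<And>n. 2 powr (a ^ n) \<le> 2 powr (b ^ (2 ^ k * n))"
proof -
  obtain k where k: "a < b ^ k" using real_arch_pow[OF b] by blast
  have "b ^ k \<le> b ^ (2 ^ k)" using b by (intro power_increasing) (auto intro: less_imp_le less_exp)
  with k have "a ^ n \<le> (b ^ (2 ^ k)) ^ n" for n
    using a by (intro power_mono) auto
  then have "2 powr (a ^ n) \<le> 2 powr (b ^ (2 ^ k * n))" for n
    by (intro powr_mono) (auto simp: power_mult)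
  then show ?thesis by (rule that)
qed

theorem mainTheorem4:
  shows "(\<forall>h :: nat \<Rightarrow> nat. mono h \<longrightarrow>
            IOE (\<lambda>n. real (h n)) \<equiv>\<^sub>W IOE (\<lambda>n. real (h (2 * n))) \<and>
            AED (\<lambda>n. real (h n)) \<equiv>\<^sub>S AED (\<lambda>n. real (h (2 * n))))
       \<and> (\<forall>a b :: real. a > 1 \<longrightarrow> b > 1 \<longrightarrow>
            IOE (\<lambda>n. 2 powr (a ^ n)) \<equiv>\<^sub>W IOE (\<lambda>n. 2 powr (b ^ n)) \<and>
            AED (\<lambda>n. 2 powr (a ^ n)) \<equiv>\<^sub>S AED (\<lambda>n. 2 powr (b ^ n)))"
proof (intro conjI allI impI)
  fix h :: "nat \<Rightarrow> nat" assume "mono h"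
  then have "mono (\<lambda>n. real (h n))" by (intro monoI) (simp add: monoD)
  then show "IOE (\<lambda>n. real (h n)) \<equiv>\<^sub>W IOE (\<lambda>n. real (h (2 * n)))"
    and "AED (\<lambda>n. real (h n)) \<equiv>\<^sub>S AED (\<lambda>n. real (h (2 * n)))"
    by (rule IOE_double_weak_eq, rule AED_double_strong_eq)
next
  fix a b :: real assume a: "a > 1" and b: "b > 1"
  obtain k where k: "\<And>n. 2 powr (a ^ n) \<le> 2 powr (b ^ (2 ^ k * n))"
    using double_exp_le_dilation[OF a b] by blast
  obtain l where l: "\<And>n. 2 powr (b ^ n) \<le> 2 powr (a ^ (2 ^ l * n))"
    using double_exp_le_dilation[OF b a] by blast
  show "IOE (\<lambda>n. 2 powr (a ^ n)) \<equiv>\<^sub>W IOE (\<lambda>n. 2 powr (b ^ n))"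
    unfolding weak_eq_def
    using IOE_weak_red_if_le_dilation[OF mono_double_exp[OF b] k]
      IOE_weak_red_if_le_dilation[OF mono_double_exp[OF a] l] by blast
  show "AED (\<lambda>n. 2 powr (a ^ n)) \<equiv>\<^sub>S AED (\<lambda>n. 2 powr (b ^ n))"
    unfolding strong_eq_def
    using AED_strong_red_if_le_dilation[OF mono_double_exp[OF a] l]
      AED_strong_red_if_le_dilation[OF mono_double_exp[OF b] k] by blast
qed

end
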